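(* Let $f=\frac1n\sum_{i=1}^n f_i$ be convex, and suppose each $f_i$ is $L_i$-smooth for some $L_i>0$. Let $L=\max_{1\le i\le n}L_i$, let $\mu\in(0,2/L]$, and let the integers $t(k)\ge 1$ satisfy $\sum_{k=0}^\infty \beta^{t(k)}<\infty$. Let $\{\mathbf{x}_k\}$ be generated by NEAR-DGD$^+$ from an arbitrary initial point $\mathbf{x}_0\in\mathbb{R}^{np}$. Then for any minimizer $x_*\in X^*$, with $\mathbf{x}_*:=1_n\otimes x_*=(x_*^\top,\dots,x_*^\top)^\top$, $$\|\bar{\mathbf{x}}_k-\mathbf{x}_*\|=O(1)\quad\text{and}\quad \|\bar{\mathbf{x}}_{k+1}-\mathbf{x}_{k+1}\|=O(\beta^{t(k)})\qquad (k\to\infty).$$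
   Context: Let $n,p\in\mathbb{N}$. $W=(w_{ij})$ is an $n\times n$ doubly stochastic matrix whose associated directed graph is strongly connected and has a self-loop at every vertex ($w_{ii}>0$ for all $i$). $1_n\in\mathbb{R}^n$ is the all-ones vector, and $\beta\in[0,1)$ denotes the spectral norm of $W-\frac1n1_n1_n^\top$. Local costs $f_i:\mathbb{R}^p\to\mathbb{R}$ are differentiable, $f=\frac1n\sum_{i=1}^n f_i$, $f^*=\min f$, and $X^*=\{x: f(x)=f^*\}$ is assumed nonempty. A function $h$ is $L$-smooth if $\|\nabla h(x)-\nabla h(y)\|\le L\|x-y\|$ for all $x,y$. For $\mathbf{x}=(x_1^\top,\dots,x_n^\top)^\top\in\mathbb{R}^{np}$ write $\nabla F(\mathbf{x})=(\nabla f_1(x_1)^\top,\dots,\nabla f_n(x_n)^\top)^\top$. NEAR-DGD$^+$ with step size $\mu>0$ and consensus numbers $t(k)\in\mathbb{N}$ is the iteration $\mathbf{x}_{k+1}=(W^{t(k)}\otimes I_p)(\mathbf{x}_k-\mu\nabla F(\mathbf{x}_k))$, $k\ge0$, where $\otimes$ is the Kronecker product and $I_p$ the $p\times p$ identity. Writing $\mathbf{x}_k=(x_{1,k}^\top,\dots,x_{n,k}^\top)^\top$, set $\bar x_k=\frac1n\sum_{i=1}^n x_{i,k}\in\mathbb{R}^p$ and $\bar{\mathbf{x}}_k=1_n\otimes\bar x_k\in\mathbb{R}^{np}$. $\|\cdot\|$ is the Euclidean norm. *)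

theory Defs
  imports "HOL-Analysis.Analysis" "HOL-Library.Landau_Symbols"
begin

fun matpow :: "real^'n^'n \<Rightarrow> nat \<Rightarrow> real^'n^'n" where
  "matpow W 0 = mat 1"
| "matpow W (Suc k) = W ** matpow W k"

definition doubly_stochastic :: "real^'n^'n \<Rightarrow> bool" where
  "doubly_stochastic W \<longleftrightarrow>
     (\<forall>i j. W$i$j \<ge> 0) \<and> (\<forall>i. (\<Sum>j\<in>UNIV. W$i$j) = 1) \<and> (\<forall>j. (\<Sum>i\<in>UNIV. W$i$j) = 1)"

definition graph_edges :: "real^'n^'n \<Rightarrow> ('n \<times> 'n) set" where
  "graph_edges W = {(i,j). W$i$j > 0}"

definition strongly_connected :: "real^'n^'n \<Rightarrow> bool" where
  "strongly_connected W \<longleftrightarrow> (\<forall>i j. (i,j) \<in> (graph_edges W)\<^sup>*)"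

definition avg_mat :: "real^'n^'n" where
  "avg_mat = (\<chi> i j. 1 / real CARD('n))"

definition beta :: "real^'n^'n \<Rightarrow> real" where
  "beta W = onorm (\<lambda>x. (W - avg_mat) *v x)"

definition smooth :: "real \<Rightarrow> (real^'p \<Rightarrow> real^'p) \<Rightarrow> bool" where
  "smooth L gr \<longleftrightarrow> (\<forall>x y. norm (gr x - gr y) \<le> L * norm (x - y))"

text \<open>One NEAR-DGD+ step: agent i gets sum_j (W^t)_ij (x_j - mu grad f_j(x_j)),
  i.e. (W^t \<otimes> I_p)(x - mu \<nabla>F(x)) with stacked vectors as real^'p^'n.\<close>
definition neardgd_step ::
  "real^'n^'n \<Rightarrow> nat \<Rightarrow> real \<Rightarrow> ('n \<Rightarrow> real^'p \<Rightarrow> real^'p) \<Rightarrow> real^'p^'n \<Rightarrow> real^'p^'n" where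
  "neardgd_step W t mu gr x =
     (\<chi> i. \<Sum>j\<in>UNIV. (matpow W t)$i$j *\<^sub>R (x$j - mu *\<^sub>R gr j (x$j)))"

definition avg_stack :: "real^'p^'n \<Rightarrow> real^'p^'n" where
  "avg_stack x = (\<chi> i. (1 / real CARD('n)) *\<^sub>R (\<Sum>j\<in>UNIV. x$j))"

end

theory Submission
  imports Defs
begin

text \<open>For a convex cost with L-Lipschitz gradient, gradients are co-coercive, so the step
  z - \<mu> \<nabla>f(z) is nonexpansive for \<mu> \<le> 2/L and fixes every minimiser x*. As W is doubly
  stochastic, the mean xbar_k of the agents performs exactly this step up to an error \<mu> L d_k,
  where d_k is the distance of x_k from consensus, and t(k) consensus rounds shrink that distance
  by the factor \<beta>^t(k). With a_k = |xbar_k - x*| this gives a_(k+1) \<le> a_k + \<mu> L d_k and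
  d_(k+1) \<le> K \<beta>^t(k) (1 + a_k + d_k), and summability of \<beta>^t(k) bounds both sequences
  by a discrete Gronwall argument.\<close>

section \<open>Convex functions with Lipschitz gradient\<close>

lemma has_field_derivative_along_line:
  fixes g :: "'a::real_inner \<Rightarrow> real"
  assumes grad: "\<And>z. (g has_derivative (\<lambda>h. G z \<bullet> h)) (at z)"
  shows "((\<lambda>s. g (x + s *\<^sub>R h)) has_field_derivative (G (x + s *\<^sub>R h) \<bullet> h)) (at s)"
proof -
  have "((\<lambda>s. x + s *\<^sub>R h) has_derivative (\<lambda>t. t *\<^sub>R h)) (at s)"
    by (auto intro!: derivative_eq_intros)
  from diff_chain_at[OF this grad]
  have "((\<lambda>s. g (x + s *\<^sub>R h)) has_derivative (\<lambda>t. G (x + s *\<^sub>R h) \<bullet> (t *\<^sub>R h))) (at s)"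
    by (simp add: o_def)
  then show ?thesis
    unfolding has_field_derivative_def
    by (rule has_derivative_eq_rhs) (auto simp: fun_eq_iff mult.commute)
qed

lemma power2_norm_diff:
  fixes a b :: "'a::real_inner"
  shows "(norm (a - b))\<^sup>2 = (norm a)\<^sup>2 - 2 * (a \<bullet> b) + (norm b)\<^sup>2"
  by (simp add: power2_norm_eq_inner inner_diff_left inner_diff_right inner_commute)

lemma lipschitz_gradient_upper_bound:
  fixes g :: "'a::real_inner \<Rightarrow> real"
  assumes grad: "\<And>z. (g has_derivative (\<lambda>h. G z \<bullet> h)) (at z)"
    and lip: "\<And>u v. norm (G u - G v) \<le> L * norm (u - v)"
  shows "g y \<le> g x + G x \<bullet> (y - x) + L / 2 * (norm (y - x))\<^sup>2"
proof -
  define h where "h = y - x"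
  define \<phi> where "\<phi> s = g (x + s *\<^sub>R h) - s * (G x \<bullet> h) - L / 2 * s\<^sup>2 * (norm h)\<^sup>2" for s
  have "\<phi> 1 \<le> \<phi> 0"
  proof (rule DERIV_nonpos_imp_nonincreasing[of 0 1 \<phi>])
    fix s :: real
    assume s: "0 \<le> s" "s \<le> 1"
    have \<phi>': "(\<phi> has_field_derivative (G (x + s *\<^sub>R h) \<bullet> h - G x \<bullet> h - L * s * (norm h)\<^sup>2)) (at s)"
      unfolding \<phi>_def
      by (intro DERIV_diff has_field_derivative_along_line[OF grad]) (auto intro!: derivative_eq_intros)
    have "G (x + s *\<^sub>R h) \<bullet> h - G x \<bullet> h = (G (x + s *\<^sub>R h) - G x) \<bullet> h"
      by (simp add: inner_diff_left)
    also have "\<dots> \<le> norm (G (x + s *\<^sub>R h) - G x) * norm h"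
      by (rule norm_cauchy_schwarz)
    also have "\<dots> \<le> L * norm (s *\<^sub>R h) * norm h"
      using lip[of "x + s *\<^sub>R h" x] by (simp add: mult_right_mono)
    also have "\<dots> = L * s * (norm h)\<^sup>2"
      using s by (simp add: power2_eq_square)
    finally show "\<exists>y. (\<phi> has_real_derivative y) (at s) \<and> y \<le> 0"
      using \<phi>' by auto
  qed simp
  then show ?thesis
    unfolding \<phi>_def h_def by simp
qed

lemma convex_gradient_lower_bound:
  fixes g :: "'a::real_inner \<Rightarrow> real"
  assumes grad: "\<And>z. (g has_derivative (\<lambda>h. G z \<bullet> h)) (at z)"
    and cvx: "convex_on UNIV g"
  shows "g x + G x \<bullet> (y - x) \<le> g y"
proof -
  define h where "h = y - x"
  define \<psi> where "\<psi> s = g (x + s *\<^sub>R h)" for s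
  have "convex_on UNIV \<psi>"
  proof (rule convex_onI)
    fix t a b :: real
    assume t: "0 < t" "t < 1"
    have "\<psi> ((1 - t) *\<^sub>R a + t *\<^sub>R b) = g ((1 - t) *\<^sub>R (x + a *\<^sub>R h) + t *\<^sub>R (x + b *\<^sub>R h))"
      unfolding \<psi>_def by (simp add: algebra_simps)
    also have "\<dots> \<le> (1 - t) * \<psi> a + t * \<psi> b"
      unfolding \<psi>_def using t by (intro convex_onD[OF cvx]) auto
    finally show "\<psi> ((1 - t) *\<^sub>R a + t *\<^sub>R b) \<le> (1 - t) * \<psi> a + t * \<psi> b" .
  qed simp
  moreover have "(\<psi> has_field_derivative (G x \<bullet> h)) (at 0 within UNIV)"
    using has_field_derivative_along_line[OF grad, of x h 0] unfolding \<psi>_def by simp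
  ultimately have "\<psi> 1 - \<psi> 0 \<ge> (G x \<bullet> h) * (1 - 0)"
    by (intro convex_on_imp_above_tangent) auto
  then show ?thesis
    unfolding \<psi>_def h_def by simp
qed

text \<open>The lower bound is obtained by comparing g at the point y - (1/L)(G y - G x) with the
  tangent at x (convexity) and with the quadratic upper bound at y (smoothness).\<close>
lemma convex_lipschitz_gradient_lower_bound:
  fixes g :: "'a::real_inner \<Rightarrow> real"
  assumes grad: "\<And>z. (g has_derivative (\<lambda>h. G z \<bullet> h)) (at z)"
    and cvx: "convex_on UNIV g"
    and lip: "\<And>u v. norm (G u - G v) \<le> L * norm (u - v)"
    and L: "0 < L"
  shows "g x + G x \<bullet> (y - x) + 1 / (2 * L) * (norm (G y - G x))\<^sup>2 \<le> g y"
proof -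
  define \<delta> where "\<delta> = G y - G x"
  define z where "z = y - (1 / L) *\<^sub>R \<delta>"
  have tangent: "g x + G x \<bullet> (z - x) \<le> g z"
    by (rule convex_gradient_lower_bound[OF grad cvx])
  have quadratic: "g z \<le> g y + G y \<bullet> (z - y) + L / 2 * (norm (z - y))\<^sup>2"
    by (rule lipschitz_gradient_upper_bound[OF grad lip])
  have "G y \<bullet> \<delta> - G x \<bullet> \<delta> = (norm \<delta>)\<^sup>2"
    unfolding \<delta>_def by (simp add: power2_norm_eq_inner inner_diff_left)
  then have "(1 / L) * (G y \<bullet> \<delta>) - (1 / L) * (G x \<bullet> \<delta>) = 1 / L * (norm \<delta>)\<^sup>2"
    by (metis right_diff_distrib)
  moreover have "G x \<bullet> (z - x) = G x \<bullet> (y - x) - (1 / L) * (G x \<bullet> \<delta>)"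
    and "G y \<bullet> (z - y) = - (1 / L) * (G y \<bullet> \<delta>)"
    unfolding z_def by (simp_all add: inner_diff_right algebra_simps)
  moreover have "L / 2 * (norm (z - y))\<^sup>2 = 1 / (2 * L) * (norm \<delta>)\<^sup>2"
    unfolding z_def using L by (simp add: power2_eq_square field_simps)
  moreover have "1 / L * (norm \<delta>)\<^sup>2 - 1 / (2 * L) * (norm \<delta>)\<^sup>2 = 1 / (2 * L) * (norm \<delta>)\<^sup>2"
    by (simp add: field_simps)
  ultimately show ?thesis
    using tangent quadratic unfolding \<delta>_def[symmetric] by linarith
qed

lemma lipschitz_gradient_cocoercive:
  fixes g :: "'a::real_inner \<Rightarrow> real"
  assumes grad: "\<And>z. (g has_derivative (\<lambda>h. G z \<bullet> h)) (at z)"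
    and cvx: "convex_on UNIV g"
    and lip: "\<And>u v. norm (G u - G v) \<le> L * norm (u - v)"
    and L: "0 < L"
  shows "1 / L * (norm (G y - G x))\<^sup>2 \<le> (G y - G x) \<bullet> (y - x)"
proof -
  have "g x + G x \<bullet> (y - x) + 1 / (2 * L) * (norm (G y - G x))\<^sup>2 \<le> g y"
    and "g y + G y \<bullet> (x - y) + 1 / (2 * L) * (norm (G x - G y))\<^sup>2 \<le> g x"
    by (rule convex_lipschitz_gradient_lower_bound[OF assms])+
  moreover have "norm (G x - G y) = norm (G y - G x)"
    by (rule norm_minus_commute)
  moreover have "G y \<bullet> (x - y) = - (G y \<bullet> (y - x))"
    by (simp add: inner_diff_right)
  moreover have "1 / L * (norm (G y - G x))\<^sup>2
      = 1 / (2 * L) * (norm (G y - G x))\<^sup>2 + 1 / (2 * L) * (norm (G y - G x))\<^sup>2"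
    by (simp add: field_simps)
  ultimately show ?thesis
    by (simp add: inner_diff_left)
qed

lemma gradient_step_nonexpansive:
  fixes g :: "'a::real_inner \<Rightarrow> real"
  assumes grad: "\<And>z. (g has_derivative (\<lambda>h. G z \<bullet> h)) (at z)"
    and cvx: "convex_on UNIV g"
    and lip: "\<And>u v. norm (G u - G v) \<le> L * norm (u - v)"
    and L: "0 < L" and mu: "0 < mu" "mu \<le> 2 / L"
  shows "norm ((y - mu *\<^sub>R G y) - (x - mu *\<^sub>R G x)) \<le> norm (y - x)"
proof -
  define \<delta> where "\<delta> = G y - G x"
  have cocoercive: "1 / L * (norm \<delta>)\<^sup>2 \<le> \<delta> \<bullet> (y - x)"
    unfolding \<delta>_def by (rule lipschitz_gradient_cocoercive[OF grad cvx lip L])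
  have "mu * (mu * (norm \<delta>)\<^sup>2) \<le> mu * (2 / L * (norm \<delta>)\<^sup>2)"
    using mu by (intro mult_left_mono mult_right_mono) auto
  also have "\<dots> = 2 * mu * (1 / L * (norm \<delta>)\<^sup>2)"
    by simp
  also have "\<dots> \<le> 2 * mu * (\<delta> \<bullet> (y - x))"
    using cocoercive mu(1) by (intro mult_left_mono) auto
  finally have step_gain: "mu\<^sup>2 * (norm \<delta>)\<^sup>2 \<le> 2 * mu * (\<delta> \<bullet> (y - x))"
    by (simp add: power2_eq_square)
  have "(y - mu *\<^sub>R G y) - (x - mu *\<^sub>R G x) = (y - x) - mu *\<^sub>R \<delta>"
    unfolding \<delta>_def by (simp add: algebra_simps)
  then have "(norm ((y - mu *\<^sub>R G y) - (x - mu *\<^sub>R G x)))\<^sup>2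
      = (norm (y - x))\<^sup>2 - 2 * ((y - x) \<bullet> (mu *\<^sub>R \<delta>)) + (norm (mu *\<^sub>R \<delta>))\<^sup>2"
    by (simp only: power2_norm_diff)
  also have "\<dots> = (norm (y - x))\<^sup>2 - 2 * mu * (\<delta> \<bullet> (y - x)) + mu\<^sup>2 * (norm \<delta>)\<^sup>2"
    by (simp add: inner_commute power_mult_distrib)
  also have "\<dots> \<le> (norm (y - x))\<^sup>2"
    using step_gain by simp
  finally show ?thesis
    by (rule power2_le_imp_le) simp
qed

lemma gradient_zero_at_minimum:
  fixes g :: "'a::real_inner \<Rightarrow> real"
  assumes grad: "(g has_derivative (\<lambda>h. G \<bullet> h)) (at x)"
    and min: "\<And>y. g x \<le> g y"
  shows "G = 0"
proof -
  have "(\<lambda>h. G \<bullet> h) = (\<lambda>h. 0)"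
    using min by (intro differential_zero_maxmin[OF _ open_UNIV grad]) auto
  then have "G \<bullet> G = 0"
    by metis
  then show ?thesis
    by simp
qed

section \<open>Stacked vectors and consensus\<close>

definition mean :: "'a::real_vector^'n \<Rightarrow> 'a" where
  "mean z = (1 / real CARD('n)) *\<^sub>R (\<Sum>j\<in>UNIV. z $ j)"

lemma avg_stack_eq_mean: "avg_stack z = (\<chi> i. mean z)"
  unfolding avg_stack_def mean_def ..

lemma mean_diff: "mean (z - w) = mean z - mean w"
  unfolding mean_def by (simp add: sum_subtractf scaleR_diff_right)

lemma mean_scaleR: "mean (c *\<^sub>R z) = c *\<^sub>R mean z"
  unfolding mean_def by (simp add: scaleR_sum_right)

lemma mean_const [simp]: "mean (\<chi> i. c :: 'a::real_vector^'n) = c"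
  unfolding mean_def by (simp add: sum_constant_scaleR)

lemma norm_mean_le:
  fixes z :: "'a::real_normed_vector^'n"
  assumes "\<And>j. norm (z $ j) \<le> c"
  shows "norm (mean z) \<le> c"
proof -
  have "norm (\<Sum>j\<in>UNIV. z $ j) \<le> (\<Sum>j\<in>(UNIV::'n set). c)"
    using assms by (intro order.trans[OF norm_sum] sum_mono)
  then show ?thesis
    unfolding mean_def by (simp add: field_simps)
qed

lemma norm_nth_minus_mean_le: "norm (x $ j - mean x) \<le> norm (avg_stack x - x)"
proof -
  have "norm (x $ j - mean x) = norm ((avg_stack x - x) $ j)"
    by (simp add: avg_stack_eq_mean norm_minus_commute)
  also have "\<dots> \<le> norm (avg_stack x - x)"
    by (rule Finite_Cartesian_Product.norm_nth_le)
  finally show ?thesis .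
qed

lemma norm_vec_const: "norm (\<chi> i. c :: 'a::real_normed_vector^'n) = sqrt (real CARD('n)) * norm c"
  unfolding norm_vec_def by (simp add: L2_set_constant)

lemma power2_norm_vec: "(norm (u :: 'a::real_inner^'n))\<^sup>2 = (\<Sum>i\<in>UNIV. (norm (u $ i))\<^sup>2)"
  by (simp add: power2_norm_eq_inner inner_vec_def)

lemma norm_vec_le_scaled:
  fixes u :: "'a::real_normed_vector^'n" and v :: "'b::real_normed_vector^'n"
  assumes "\<And>j. norm (u $ j) \<le> c * norm (v $ j)" and "0 \<le> c"
  shows "norm u \<le> c * norm v"
  unfolding norm_vec_def L2_set_right_distrib[OF \<open>0 \<le> c\<close>]
  using assms(1) by (intro L2_set_mono) auto

text \<open>kron_apply B z is (B \<otimes> I_p) z for a stacked vector z.\<close>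
definition kron_apply :: "real^'n^'n \<Rightarrow> 'a::real_vector^'n \<Rightarrow> 'a^'n" where
  "kron_apply B z = (\<chi> i. \<Sum>j\<in>UNIV. B $ i $ j *\<^sub>R z $ j)"

lemma kron_apply_diff_left: "kron_apply (A - B) z = kron_apply A z - kron_apply B z"
  unfolding kron_apply_def by (simp add: vec_eq_iff scaleR_diff_left sum_subtractf)

lemma kron_apply_diff_right: "kron_apply A (z - w) = kron_apply A z - kron_apply A w"
  unfolding kron_apply_def by (simp add: vec_eq_iff scaleR_diff_right sum_subtractf)

lemma kron_apply_avg_mat: "kron_apply avg_mat z = (\<chi> i. mean z)"
  unfolding kron_apply_def avg_mat_def mean_def by (simp add: scaleR_sum_right)

lemma kron_apply_matrix_mult: "kron_apply (A ** B) z = kron_apply A (kron_apply B z)"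
proof -
  have "(\<Sum>j\<in>UNIV. (\<Sum>k\<in>UNIV. A $ i $ k * B $ k $ j) *\<^sub>R z $ j)
      = (\<Sum>k\<in>UNIV. A $ i $ k *\<^sub>R (\<Sum>j\<in>UNIV. B $ k $ j *\<^sub>R z $ j))" for i
  proof -
    have "(\<Sum>j\<in>UNIV. (\<Sum>k\<in>UNIV. A $ i $ k * B $ k $ j) *\<^sub>R z $ j)
        = (\<Sum>j\<in>UNIV. \<Sum>k\<in>UNIV. A $ i $ k *\<^sub>R (B $ k $ j *\<^sub>R z $ j))"
      by (simp add: scaleR_sum_left)
    also have "\<dots> = (\<Sum>k\<in>UNIV. \<Sum>j\<in>UNIV. A $ i $ k *\<^sub>R (B $ k $ j *\<^sub>R z $ j))"
      by (rule sum.swap)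
    finally show ?thesis
      by (simp add: scaleR_sum_right)
  qed
  then show ?thesis
    unfolding kron_apply_def matrix_matrix_mult_def by (simp add: vec_eq_iff)
qed

lemma mean_kron_apply:
  assumes "\<And>j. (\<Sum>i\<in>UNIV. M $ i $ j) = 1"
  shows "mean (kron_apply M z) = mean z"
proof -
  have "(\<Sum>i\<in>UNIV. kron_apply M z $ i) = (\<Sum>j\<in>UNIV. (\<Sum>i\<in>UNIV. M $ i $ j) *\<^sub>R z $ j)"
    unfolding kron_apply_def by (simp add: scaleR_sum_left) (rule sum.swap)
  then show ?thesis
    unfolding mean_def using assms by simp
qed

lemma kron_apply_const:
  assumes "\<And>i. (\<Sum>j\<in>UNIV. M $ i $ j) = 1"
  shows "kron_apply M (\<chi> i. c) = (\<chi> i. c)"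
  unfolding kron_apply_def using assms by (simp add: vec_eq_iff flip: scaleR_sum_left)

lemma matpow_column_sums:
  assumes "doubly_stochastic W"
  shows "(\<Sum>i\<in>UNIV. matpow W t $ i $ j) = 1"
proof (induction t arbitrary: j)
  case 0
  then show ?case
    by (simp add: mat_def if_distrib cong: if_cong)
next
  case (Suc t)
  have "(\<Sum>i\<in>UNIV. matpow W (Suc t) $ i $ j) = (\<Sum>k\<in>UNIV. (\<Sum>i\<in>UNIV. W $ i $ k) * matpow W t $ k $ j)"
    by (simp add: matrix_matrix_mult_def sum_distrib_right) (rule sum.swap)
  then show ?case
    using assms Suc.IH unfolding doubly_stochastic_def by simp
qed

lemma norm_kron_apply_le:
  fixes B :: "real^'n^'n" and z :: "real^'p^'n"
  shows "norm (kron_apply B z) \<le> onorm ((*v) B) * norm z"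
proof -
  define b where "b = onorm ((*v) B)"
  define column where "column c = (\<chi> j. z $ j $ c)" for c
  have "kron_apply B z $ i $ c = (B *v column c) $ i" for i c
    unfolding kron_apply_def column_def matrix_vector_mult_def by (simp add: mult.commute)
  then have "(norm (kron_apply B z))\<^sup>2 = (\<Sum>i\<in>UNIV. \<Sum>c\<in>UNIV. ((B *v column c) $ i)\<^sup>2)"
    by (simp add: power2_norm_vec)
  also have "\<dots> = (\<Sum>c\<in>UNIV. (norm (B *v column c))\<^sup>2)"
    by (subst sum.swap) (simp add: power2_norm_vec)
  also have "\<dots> \<le> (\<Sum>c\<in>UNIV. (b * norm (column c))\<^sup>2)"
    unfolding b_def by (intro sum_mono power_mono onorm) auto
  also have "\<dots> = b\<^sup>2 * (\<Sum>c\<in>UNIV. \<Sum>j\<in>UNIV. (z $ j $ c)\<^sup>2)"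
    by (simp add: power_mult_distrib power2_norm_vec column_def sum_distrib_left)
  also have "\<dots> = (b * norm z)\<^sup>2"
    by (subst sum.swap) (simp add: power_mult_distrib power2_norm_vec)
  finally show ?thesis
    unfolding b_def by (rule power2_le_imp_le) (simp add: onorm_pos_le)
qed

lemma beta_nonneg: "0 \<le> beta W"
  unfolding beta_def by (rule onorm_pos_le) simp

lemma norm_kron_apply_minus_mean_le:
  fixes z :: "real^'p^'n"
  shows "norm (kron_apply W z - (\<chi> i. mean z)) \<le> beta W * norm z"
  using norm_kron_apply_le[of "W - avg_mat" z]
  by (simp add: beta_def kron_apply_diff_left kron_apply_avg_mat)

text \<open>This is W^t - 11^T/n = (W - 11^T/n)^t for doubly stochastic W, applied one factor at a
  time: each further consensus round acts on a disagreement vector of mean zero.\<close>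
lemma consensus_contraction:
  fixes z :: "real^'p^'n"
  assumes ds: "doubly_stochastic W" and t: "1 \<le> t"
  shows "norm (kron_apply (matpow W t) z - (\<chi> i. mean z)) \<le> beta W ^ t * norm z"
proof -
  have rows: "\<And>i. (\<Sum>j\<in>UNIV. W $ i $ j) = 1"
    using ds unfolding doubly_stochastic_def by blast
  have "norm (kron_apply (matpow W (Suc m)) z - (\<chi> i. mean z)) \<le> beta W ^ Suc m * norm z" for m
  proof (induction m)
    case 0
    then show ?case
      using norm_kron_apply_minus_mean_le[of W z] by simp
  next
    case (Suc m)
    define v where "v = kron_apply (matpow W (Suc m)) z - (\<chi> i. mean z)"
    have "mean v = 0"
      unfolding v_def mean_diff mean_kron_apply[OF matpow_column_sums[OF ds]] by simp
    then have "kron_apply (matpow W (Suc (Suc m))) z - (\<chi> i. mean z) = kron_apply W v - (\<chi> i. mean v)"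
      unfolding v_def by (simp add: kron_apply_matrix_mult kron_apply_diff_right kron_apply_const[OF rows] vec_eq_iff)
    also have "norm \<dots> \<le> beta W * norm v"
      by (rule norm_kron_apply_minus_mean_le)
    also have "\<dots> \<le> beta W * (beta W ^ Suc m * norm z)"
      using Suc.IH unfolding v_def by (intro mult_left_mono beta_nonneg)
    finally show ?case
      by (simp add: mult.assoc)
  qed
  moreover obtain m where "t = Suc m"
    using t by (cases t) auto
  ultimately show ?thesis
    by simp
qed

section \<open>The NEAR-DGD+ iteration\<close>

definition grad_step :: "real \<Rightarrow> ('n \<Rightarrow> 'a \<Rightarrow> 'a) \<Rightarrow> 'a^'n \<Rightarrow> 'a::real_vector^'n" where
  "grad_step mu gr x = (\<chi> j. x $ j - mu *\<^sub>R gr j (x $ j))"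

lemma neardgd_step_eq_kron_apply:
  "neardgd_step W t mu gr x = kron_apply (matpow W t) (grad_step mu gr x)"
  unfolding neardgd_step_def kron_apply_def grad_step_def by simp

lemma mean_neardgd_step:
  assumes "doubly_stochastic W"
  shows "mean (neardgd_step W t mu gr x) = mean x - mu *\<^sub>R mean (\<chi> j. gr j (x $ j))"
proof -
  have "grad_step mu gr x = x - mu *\<^sub>R (\<chi> j. gr j (x $ j))"
    unfolding grad_step_def by (simp add: vec_eq_iff)
  then show ?thesis
    by (simp add: neardgd_step_eq_kron_apply mean_kron_apply[OF matpow_column_sums[OF assms]]
        mean_diff mean_scaleR)
qed

lemma consensus_error_neardgd_step:
  fixes gr :: "'n::finite \<Rightarrow> real^'p \<Rightarrow> real^'p"
  assumes "doubly_stochastic W" and "1 \<le> t"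
  shows "norm (avg_stack (neardgd_step W t mu gr x) - neardgd_step W t mu gr x)
    \<le> beta W ^ t * norm (grad_step mu gr x)"
  using consensus_contraction[OF assms, of "grad_step mu gr x"]
  by (simp add: neardgd_step_eq_kron_apply avg_stack_eq_mean norm_minus_commute
      mean_kron_apply[OF matpow_column_sums[OF assms(1)]])

text \<open>The mean moves by an exact gradient step of the averaged cost, perturbed by the
  gradient mismatch caused by disagreement between the agents.\<close>
lemma mean_error_neardgd_step:
  fixes gr :: "'n::finite \<Rightarrow> real^'p \<Rightarrow> real^'p"
  assumes ds: "doubly_stochastic W"
    and lip: "\<And>j u v. norm (gr j u - gr j v) \<le> L * norm (u - v)"
    and "0 \<le> L" "0 \<le> mu"
    and nonexp: "\<And>u. norm ((u - mu *\<^sub>R mean (\<chi> j. gr j u)) - xs) \<le> norm (u - xs)"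
  shows "norm (mean (neardgd_step W t mu gr x) - xs)
    \<le> norm (mean x - xs) + mu * L * norm (avg_stack x - x)"
proof -
  define m where "m = mean x"
  define mismatch where "mismatch = mean (\<chi> j. gr j (x $ j)) - mean (\<chi> j. gr j m)"
  have "norm mismatch \<le> L * norm (avg_stack x - x)"
  proof -
    have "mismatch = mean (\<chi> j. gr j (x $ j) - gr j m)"
      unfolding mismatch_def mean_diff[symmetric] by (rule arg_cong[where f = mean]) (simp add: vec_eq_iff)
    also have "norm \<dots> \<le> L * norm (avg_stack x - x)"
    proof (intro norm_mean_le)
      fix j
      show "norm ((\<chi> j. gr j (x $ j) - gr j m) $ j) \<le> L * norm (avg_stack x - x)"
        using lip[of j "x $ j" m] mult_left_mono[OF norm_nth_minus_mean_le[of x j] \<open>0 \<le> L\<close>]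
        unfolding m_def by simp
    qed
    finally show ?thesis .
  qed
  have "mean (neardgd_step W t mu gr x) - xs
      = ((m - mu *\<^sub>R mean (\<chi> j. gr j m)) - xs) - mu *\<^sub>R mismatch"
    unfolding mean_neardgd_step[OF ds] mismatch_def m_def by (simp add: algebra_simps)
  then have "norm (mean (neardgd_step W t mu gr x) - xs)
      \<le> norm ((m - mu *\<^sub>R mean (\<chi> j. gr j m)) - xs) + norm (mu *\<^sub>R mismatch)"
    by (simp only: norm_triangle_ineq4)
  also have "\<dots> \<le> norm (m - xs) + mu * (L * norm (avg_stack x - x))"
    using nonexp[of m] \<open>norm mismatch \<le> L * norm (avg_stack x - x)\<close> \<open>0 \<le> mu\<close>
    by (intro add_mono) (auto intro: mult_left_mono)
  finally show ?thesis
    unfolding m_def by (simp add: mult.assoc)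
qed

lemma grad_step_linear_growth:
  fixes gr :: "'n::finite \<Rightarrow> real^'p \<Rightarrow> real^'p"
  assumes lip: "\<And>j u v. norm (gr j u - gr j v) \<le> L * norm (u - v)"
    and "0 \<le> L" "0 \<le> mu"
  shows "\<exists>K\<ge>0. \<forall>x. norm (grad_step mu gr x) \<le> K * (1 + norm (mean x - xs) + norm (avg_stack x - x))"
proof -
  define c where "c = 1 + mu * L"
  define s where "s = sqrt (real CARD('n))"
  define K where "K = norm (grad_step mu gr (\<chi> i. xs)) + c * (1 + s)"
  have "c \<ge> 1" "s \<ge> 0"
    unfolding c_def s_def using assms(2,3) by auto
  have "norm (grad_step mu gr x) \<le> K * (1 + norm (mean x - xs) + norm (avg_stack x - x))" for x
  proof -
    have lipschitz: "norm (grad_step mu gr x - grad_step mu gr (\<chi> i. xs)) \<le> c * norm (x - (\<chi> i. xs))"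
    proof (rule norm_vec_le_scaled)
      fix j
      have "norm ((x $ j - xs) - mu *\<^sub>R (gr j (x $ j) - gr j xs)) \<le> norm (x $ j - xs) + mu * (L * norm (x $ j - xs))"
        using norm_triangle_ineq4 lip[of j "x $ j" xs] \<open>0 \<le> mu\<close>
        by (smt (verit) mult_left_mono norm_scaleR)
      then show "norm ((grad_step mu gr x - grad_step mu gr (\<chi> i. xs)) $ j) \<le> c * norm ((x - (\<chi> i. xs)) $ j)"
        unfolding grad_step_def c_def by (simp add: algebra_simps)
    qed (use \<open>c \<ge> 1\<close> in simp)
    have split: "x - (\<chi> i. xs) = (x - avg_stack x) + (\<chi> i. mean x - xs)"
      by (simp add: avg_stack_eq_mean vec_eq_iff)
    have "norm (x - (\<chi> i. xs)) \<le> norm (x - avg_stack x) + norm (\<chi> i. mean x - xs :: real^'p^'n)"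
      unfolding split by (rule norm_triangle_ineq)
    then have "norm (x - (\<chi> i. xs)) \<le> norm (avg_stack x - x) + s * norm (mean x - xs)"
      by (simp add: norm_minus_commute norm_vec_const s_def)
    with lipschitz have "norm (grad_step mu gr x)
        \<le> norm (grad_step mu gr (\<chi> i. xs)) + c * norm (avg_stack x - x) + c * s * norm (mean x - xs)"
      using norm_triangle_sub[of "grad_step mu gr x" "grad_step mu gr (\<chi> i. xs)"] \<open>c \<ge> 1\<close>
      by (smt (verit) mult_left_mono mult.assoc distrib_left)
    moreover have "c * norm (avg_stack x - x) \<le> K * norm (avg_stack x - x)"
      and "c * s * norm (mean x - xs) \<le> K * norm (mean x - xs)"
      unfolding K_def using \<open>c \<ge> 1\<close> \<open>s \<ge> 0\<close> by (intro mult_right_mono; simp add: algebra_simps)+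
    moreover have "norm (grad_step mu gr (\<chi> i. xs)) \<le> K"
      unfolding K_def using \<open>c \<ge> 1\<close> \<open>s \<ge> 0\<close> by simp
    ultimately show ?thesis
      by (simp add: algebra_simps)
  qed
  moreover have "K \<ge> 0"
    unfolding K_def using \<open>c \<ge> 1\<close> \<open>s \<ge> 0\<close> by simp
  ultimately show ?thesis
    by blast
qed

lemma discrete_gronwall:
  fixes u e :: "nat \<Rightarrow> real"
  assumes growth: "\<And>k. u (Suc k) \<le> (1 + e k) * u k"
    and "\<And>k. 0 \<le> u k" and "\<And>k. 0 \<le> e k" and "summable e"
  shows "u k \<le> u 0 * exp (suminf e)"
proof -
  have partial: "u k \<le> u 0 * exp (\<Sum>j<k. e j)" for k
  proof (induction k)
    case 0
    then show ?case
      by simp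
  next
    case (Suc k)
    have "u (Suc k) \<le> exp (e k) * u k"
      using growth[of k] exp_ge_add_one_self[of "e k"] \<open>0 \<le> u k\<close>
      by (meson mult_right_mono order.trans)
    also have "\<dots> \<le> exp (e k) * (u 0 * exp (\<Sum>j<k. e j))"
      using Suc.IH by simp
    finally show ?case
      by (simp add: exp_add mult_ac)
  qed
  have "(\<Sum>j<k. e j) \<le> suminf e"
    using assms(3,4) by (intro sum_le_suminf) auto
  then show ?thesis
    using partial[of k] assms(2)[of 0] by (meson exp_le_cancel_iff mult_left_mono order.trans)
qed

text \<open>The weighted sum 1 + a + (1 + c) d grows at most by the factor 1 + (1 + c) K b k per step.\<close>
lemma coupled_recursion_bounded:
  fixes a d b :: "nat \<Rightarrow> real"
  assumes a0: "\<And>k. 0 \<le> a k" and d0: "\<And>k. 0 \<le> d k" and b0: "\<And>k. 0 \<le> b k"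
    and "summable b" and "0 \<le> c" and "0 \<le> K"
    and a_step: "\<And>k. a (Suc k) \<le> a k + c * d k"
    and d_step: "\<And>k. d (Suc k) \<le> K * b k * (1 + a k + d k)"
  shows "\<exists>U. \<forall>k. 1 + a k + d k \<le> U"
proof -
  define u where "u k = 1 + a k + (1 + c) * d k" for k
  have le_u: "1 + a k + d k \<le> u k" for k
    unfolding u_def using \<open>0 \<le> c\<close> d0[of k] by (simp add: algebra_simps)
  have "u (Suc k) \<le> (1 + (1 + c) * K * b k) * u k" for k
  proof -
    have "(1 + c) * d (Suc k) \<le> (1 + c) * K * b k * u k"
      using d_step[of k] mult_left_mono[OF le_u[of k], of "K * b k"] \<open>0 \<le> c\<close> \<open>0 \<le> K\<close> b0[of k]
      by (smt (verit) mult.assoc mult_left_mono zero_le_mult_iff)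
    moreover have "1 + a (Suc k) \<le> u k"
      using a_step[of k] d0[of k] unfolding u_def by (simp add: algebra_simps)
    ultimately show ?thesis
      unfolding u_def[of "Suc k"] by (simp add: algebra_simps)
  qed
  moreover have "0 \<le> u k" for k
    using le_u[of k] a0[of k] d0[of k] by linarith
  ultimately have "u k \<le> u 0 * exp (suminf (\<lambda>k. (1 + c) * K * b k))" for k
    using \<open>summable b\<close> \<open>0 \<le> c\<close> \<open>0 \<le> K\<close> b0
    by (intro discrete_gronwall summable_mult) auto
  then show ?thesis
    using le_u order.trans by blast
qed

lemma mean_gradient_step_nonexpansive:
  fixes fi :: "'n::finite \<Rightarrow> 'a::real_inner \<Rightarrow> real" and gr :: "'n \<Rightarrow> 'a \<Rightarrow> 'a"
  assumes grad: "\<forall>i z. (fi i has_derivative (\<lambda>h. gr i z \<bullet> h)) (at z)"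
    and cvx: "convex_on UNIV (\<lambda>z. (1 / real CARD('n)) * (\<Sum>i\<in>UNIV. fi i z))"
    and lip: "\<And>i u v. norm (gr i u - gr i v) \<le> L * norm (u - v)"
    and "0 < L" "0 < mu" "mu \<le> 2 / L"
    and xsmin: "\<forall>y. (1 / real CARD('n)) * (\<Sum>i\<in>UNIV. fi i xs)
                    \<le> (1 / real CARD('n)) * (\<Sum>i\<in>UNIV. fi i y)"
  shows "norm ((u - mu *\<^sub>R mean (\<chi> i. gr i u)) - xs) \<le> norm (u - xs)"
proof -
  define F where "F z = (1 / real CARD('n)) * (\<Sum>i\<in>UNIV. fi i z)" for z
  define G where "G z = mean (\<chi> i. gr i z :: 'a^'n)" for z
  have F': "(F has_derivative (\<lambda>h. G z \<bullet> h)) (at z)" for z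
  proof -
    have "(F has_derivative (\<lambda>h. (1 / real CARD('n)) * (\<Sum>i\<in>UNIV. gr i z \<bullet> h))) (at z)"
      unfolding F_def using grad by (intro has_derivative_mult_right has_derivative_sum) auto
    then show ?thesis
      by (simp add: G_def mean_def inner_sum_left)
  qed
  have G_lip: "norm (G u - G v) \<le> L * norm (u - v)" for u v
  proof -
    have "G u - G v = mean (\<chi> i. gr i u - gr i v :: 'a^'n)"
      unfolding G_def mean_diff[symmetric] by (rule arg_cong[where f = mean]) (simp add: vec_eq_iff)
    also have "norm \<dots> \<le> L * norm (u - v)"
      using lip by (intro norm_mean_le) simp
    finally show ?thesis .
  qed
  have "G xs = 0"
    using xsmin unfolding F_def[symmetric] by (intro gradient_zero_at_minimum[OF F']) auto
  then show ?thesis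
    using gradient_step_nonexpansive[OF F' cvx[folded F_def] G_lip assms(4-6), of u xs]
    by (simp add: G_def)
qed

lemma neardgd_error_bounds:
  fixes W :: "real^'n^'n" and gr :: "'n \<Rightarrow> real^'p \<Rightarrow> real^'p"
    and x :: "nat \<Rightarrow> real^'p^'n"
  assumes ds: "doubly_stochastic W"
    and tpos: "\<And>k. 1 \<le> t k" and tsum: "summable (\<lambda>k. beta W ^ t k)"
    and iter: "\<And>k. x (Suc k) = neardgd_step W (t k) mu gr (x k)"
    and lip: "\<And>j u v. norm (gr j u - gr j v) \<le> L * norm (u - v)"
    and "0 \<le> L" "0 \<le> mu"
    and nonexp: "\<And>u. norm ((u - mu *\<^sub>R mean (\<chi> j. gr j u)) - xs) \<le> norm (u - xs)"
  shows "(\<lambda>k. norm (avg_stack (x k) - (\<chi> i. xs))) \<in> O(\<lambda>k. 1)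
     \<and> (\<lambda>k. norm (avg_stack (x (Suc k)) - x (Suc k))) \<in> O(\<lambda>k. beta W ^ t k)"
proof -
  define a where "a k = norm (mean (x k) - xs)" for k
  define d where "d k = norm (avg_stack (x k) - x k)" for k
  define b where "b k = beta W ^ t k" for k
  obtain K where "0 \<le> K"
    and growth: "\<And>z. norm (grad_step mu gr z) \<le> K * (1 + norm (mean z - xs) + norm (avg_stack z - z))"
    using grad_step_linear_growth[where gr = gr and xs = xs, OF lip \<open>0 \<le> L\<close> \<open>0 \<le> mu\<close>] by blast
  have b0: "0 \<le> b k" for k
    unfolding b_def by (simp add: beta_nonneg)
  have a_step: "a (Suc k) \<le> a k + mu * L * d k" for k
    unfolding a_def d_def iter
    by (rule mean_error_neardgd_step[OF ds lip \<open>0 \<le> L\<close> \<open>0 \<le> mu\<close> nonexp])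
  have d_step: "d (Suc k) \<le> K * b k * (1 + a k + d k)" for k
  proof -
    have "d (Suc k) \<le> b k * norm (grad_step mu gr (x k))"
      unfolding d_def b_def iter by (rule consensus_error_neardgd_step[OF ds tpos])
    also have "\<dots> \<le> b k * (K * (1 + a k + d k))"
      unfolding a_def d_def using growth b0 by (rule mult_left_mono)
    finally show ?thesis
      by (simp add: mult_ac)
  qed
  obtain U where U: "\<And>k. 1 + a k + d k \<le> U"
    using coupled_recursion_bounded[of a d b "mu * L" K] a_step d_step b0 tsum \<open>0 \<le> K\<close>
      \<open>0 \<le> L\<close> \<open>0 \<le> mu\<close> unfolding a_def d_def b_def by auto
  have mean_bound: "norm (avg_stack (x k) - (\<chi> i. xs)) \<le> sqrt (real CARD('n)) * U" for k
  proof -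
    have "avg_stack (x k) - (\<chi> i. xs) = (\<chi> i. mean (x k) - xs)"
      by (simp add: avg_stack_eq_mean vec_eq_iff)
    then have "norm (avg_stack (x k) - (\<chi> i. xs)) = sqrt (real CARD('n)) * a k"
      by (simp add: norm_vec_const a_def)
    also have "\<dots> \<le> sqrt (real CARD('n)) * U"
      using U[of k] norm_ge_zero[of "avg_stack (x k) - x k"] unfolding d_def
      by (intro mult_left_mono) (linarith, simp)
    finally show ?thesis .
  qed
  have consensus_bound: "d (Suc k) \<le> K * U * b k" for k
    using d_step[of k] mult_left_mono[OF U[of k], of "K * b k"] \<open>0 \<le> K\<close> b0[of k]
    by (simp add: mult_ac)
  show ?thesis
  proof
    show "(\<lambda>k. norm (avg_stack (x k) - (\<chi> i. xs))) \<in> O(\<lambda>k. 1)"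
      using mean_bound by (intro bigoI[where c = "sqrt (real CARD('n)) * U"]) auto
    show "(\<lambda>k. norm (avg_stack (x (Suc k)) - x (Suc k))) \<in> O(\<lambda>k. beta W ^ t k)"
      using consensus_bound b0 unfolding d_def b_def by (intro bigoI[where c = "K * U"]) auto
  qed
qed

theorem theorem2p3:
  fixes W :: "real^'n^'n"
    and fi :: "'n \<Rightarrow> real^'p \<Rightarrow> real"
    and gr :: "'n \<Rightarrow> real^'p \<Rightarrow> real^'p"
    and Li :: "'n \<Rightarrow> real"
    and mu :: real
    and t :: "nat \<Rightarrow> nat"
    and x :: "nat \<Rightarrow> real^'p^'n"
    and xs :: "real^'p"
  assumes ds: "doubly_stochastic W"
    and sc: "strongly_connected W"
    and loops: "\<forall>i. W$i$i > 0"
    and grad: "\<forall>i z. (fi i has_derivative (\<lambda>h. gr i z \<bullet> h)) (at z)"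
    and cvx: "convex_on UNIV (\<lambda>z. (1 / real CARD('n)) * (\<Sum>i\<in>UNIV. fi i z))"
    and Lpos: "\<forall>i. Li i > 0"
    and Lsm: "\<forall>i. smooth (Li i) (gr i)"
    and mu: "0 < mu" "mu \<le> 2 / Max (range Li)"
    and tpos: "\<forall>k. t k \<ge> 1"
    and tsum: "summable (\<lambda>k. beta W ^ t k)"
    and iter: "\<forall>k. x (Suc k) = neardgd_step W (t k) mu gr (x k)"
    and xsmin: "\<forall>y. (1 / real CARD('n)) * (\<Sum>i\<in>UNIV. fi i xs)
                      \<le> (1 / real CARD('n)) * (\<Sum>i\<in>UNIV. fi i y)"
  shows "(\<lambda>k. norm (avg_stack (x k) - (\<chi> i. xs))) \<in> O(\<lambda>k. 1)
     \<and> (\<lambda>k. norm (avg_stack (x (Suc k)) - x (Suc k))) \<in> O(\<lambda>k. beta W ^ t k)"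
proof -
  \<comment> \<open>sc and loops only serve to make \<beta> < 1; summability of \<beta>^t(k) is assumed directly.\<close>
  define L where "L = Max (range Li)"
  have Li_le: "Li i \<le> L" for i
    unfolding L_def by (rule Max_ge) auto
  have "0 < L"
    using Lpos Li_le by (meson less_le_trans)
  have lip: "norm (gr i u - gr i v) \<le> L * norm (u - v)" for i u v
    using Lsm Li_le[of i] unfolding smooth_def by (meson mult_right_mono norm_ge_zero order.trans)
  have nonexp: "norm ((u - mu *\<^sub>R mean (\<chi> i. gr i u)) - xs) \<le> norm (u - xs)" for u
    using mean_gradient_step_nonexpansive[OF grad cvx lip \<open>0 < L\<close> mu[folded L_def] xsmin] .
  show ?thesis
    using neardgd_error_bounds[OF ds _ tsum _ lip _ _ nonexp] tpos iter \<open>0 < L\<close> mu(1) by auto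
qed

end
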